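(* Let $G$ be a simple undirected connected graph on vertices $u_1,\dots,u_n$ with Laplacian $L$, let $u_a\neq u_b$ satisfy $N(u_a)\setminus\{u_b\}=N(u_b)\setminus\{u_a\}$, let $M=(\mathbf e_a-\mathbf e_b)(\mathbf e_a-\mathbf e_b)^T$, $\alpha\in\mathbb R$ and $L^\alpha=L+\alpha M$. Suppose $L$ is periodic at vertex $u_p$ at time $\tau\neq 0$. Then: (1) if $p\in\{a,b\}$ and $2\alpha\tau\in\pi(2\mathbb Z+1)$, then $L^\alpha$ exhibits perfect state transfer between $u_a$ and $u_b$ at time $\tau$; (2) if $p\notin\{a,b\}$, then $L^\alpha$ is periodic at $u_p$ at time $\tau$. *)

theory Defs
  imports "HOL-Analysis.Analysis"
begin

definition simple_graph :: "('n \<Rightarrow> 'n \<Rightarrow> bool) \<Rightarrow> bool" where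
  "simple_graph E \<longleftrightarrow> (\<forall>x y. E x y \<longleftrightarrow> E y x) \<and> (\<forall>x. \<not> E x x)"

definition connected_graph :: "('n \<Rightarrow> 'n \<Rightarrow> bool) \<Rightarrow> bool" where
  "connected_graph E \<longleftrightarrow> (\<forall>x y. E\<^sup>*\<^sup>* x y)"

definition nbhd :: "('n \<Rightarrow> 'n \<Rightarrow> bool) \<Rightarrow> 'n \<Rightarrow> 'n set" where
  "nbhd E x = {y. E x y}"

definition laplacian :: "('n::finite \<Rightarrow> 'n \<Rightarrow> bool) \<Rightarrow> real^'n^'n" where
  "laplacian E = (\<chi> i j. if i = j then real (card {k. E i k}) else (if E i j then -1 else 0))"

definition ebasis :: "'n::finite \<Rightarrow> real^'n" where
  "ebasis a = (\<chi> i. if i = a then 1 else 0)"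

definition outer :: "real^'n \<Rightarrow> real^'n \<Rightarrow> real^'n^'n" where
  "outer x y = (\<chi> i j. x $ i * y $ j)"

fun mpow :: "'a::comm_ring_1^'n::finite^'n \<Rightarrow> nat \<Rightarrow> 'a^'n^'n" where
  "mpow A 0 = mat 1"
| "mpow A (Suc k) = A ** mpow A k"

definition mexp :: "complex^'n::finite^'n \<Rightarrow> complex^'n^'n" where
  "mexp A = (\<chi> i j. \<Sum>k. mpow A k $ i $ j / of_nat (fact k))"

text \<open>Transition matrix of the continuous-time quantum walk: U(t) = exp(-i t H).\<close>
definition transition :: "real^'n::finite^'n \<Rightarrow> real \<Rightarrow> complex^'n^'n" where
  "transition H t = mexp (\<chi> i j. - \<i> * complex_of_real t * complex_of_real (H $ i $ j))"

definition periodic_at :: "real^'n::finite^'n \<Rightarrow> 'n \<Rightarrow> real \<Rightarrow> bool" where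
  "periodic_at H u t \<longleftrightarrow> cmod (transition H t $ u $ u) = 1"

definition pst :: "real^'n::finite^'n \<Rightarrow> 'n \<Rightarrow> 'n \<Rightarrow> real \<Rightarrow> bool" where
  "pst H u v t \<longleftrightarrow> cmod (transition H t $ u $ v) = 1"

end

theory Submission
  imports Defs
begin

text \<open>
  For twins \<open>u\<^sub>a\<close>, \<open>u\<^sub>b\<close> the vector \<open>v = e\<^sub>a - e\<^sub>b\<close> is an eigenvector of the symmetric
  Laplacian \<open>L\<close>, with eigenvalue \<open>\<lambda> = deg u\<^sub>a + [u\<^sub>a ~ u\<^sub>b]\<close>. Hence \<open>L\<close> and \<open>M = v v\<^sup>T\<close>
  commute, \<open>(L + \<alpha> M)\<^sup>k = L\<^sup>k + d\<^sub>k M\<close> with \<open>d\<^sub>k = ((\<lambda> + 2\<alpha>)\<^sup>k - \<lambda>\<^sup>k) / 2\<close>, and summing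
  the exponential series gives \<open>U\<^sub>\<alpha>(\<tau>) = U(\<tau>) + exp(-i\<tau>\<lambda>) (exp(-2i\<alpha>\<tau>) - 1) M / 2\<close>.
  Off \<open>{a, b}\<close> the correction vanishes, so periodicity at \<open>u\<^sub>p\<close> is inherited. If
  \<open>exp(-2i\<alpha>\<tau>) = -1\<close> the correction is \<open>-exp(-i\<tau>\<lambda>) M\<close>, and together with
  \<open>U(\<tau>) v = exp(-i\<tau>\<lambda>) v\<close> this gives \<open>U\<^sub>\<alpha>(\<tau>)\<^sub>a\<^sub>b = U(\<tau>)\<^sub>a\<^sub>a = U(\<tau>)\<^sub>b\<^sub>b\<close>.
\<close>

lemma mpow_commute: "A ** mpow A k = mpow A k ** A"
  by (induction k) (simp_all, metis matrix_mul_assoc)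

lemma transpose_mpow: "transpose (mpow A k) = mpow (transpose A) k"
  by (induction k) (simp_all add: matrix_transpose_mul mpow_commute)

lemma mpow_mult_eigenvector:
  fixes A :: "real^'n::finite^'n"
  assumes "A *v v = c *\<^sub>R v"
  shows "mpow A k *v v = c ^ k *\<^sub>R v"
  by (induction k)
    (simp_all add: assms matrix_vector_mul_assoc[symmetric] matrix_vector_mult_scaleR)

lemma matrix_mult_add_rdistrib: "(A + B) ** C = A ** C + B ** (C :: 'a::semiring_1^'n^'m)"
  by (simp add: matrix_matrix_mult_def vec_eq_iff distrib_right sum.distrib)

lemma matrix_mult_outer: "A ** outer x y = outer (A *v x) y"
  by (simp add: outer_def matrix_matrix_mult_def matrix_vector_mult_def vec_eq_iff
      sum_distrib_right mult.assoc)

lemma outer_mult_matrix: "outer x y ** A = outer x (y v* A)"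
  by (simp add: outer_def matrix_matrix_mult_def vector_matrix_mult_def vec_eq_iff
      sum_distrib_left mult.assoc)

lemma outer_mult_outer: "outer x y ** outer u w = (y \<bullet> u) *\<^sub>R outer x w"
  by (simp add: outer_def matrix_matrix_mult_def inner_vec_def vec_eq_iff
      sum_distrib_left sum_distrib_right mult_ac)

lemma outer_scaleR_left: "outer (c *\<^sub>R x) y = c *\<^sub>R outer x y"
  by (simp add: outer_def vec_eq_iff mult.assoc)

lemma outer_scaleR_right: "outer x (c *\<^sub>R y) = c *\<^sub>R outer x y"
  by (simp add: outer_def vec_eq_iff mult.left_commute)

lemma mpow_rank_one_update:
  fixes L :: "real^'n::finite^'n"
  assumes "transpose L = L" and "L *v v = c *\<^sub>R v" and "v \<noteq> 0"
  shows "mpow (L + \<alpha> *\<^sub>R outer v v) k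
       = mpow L k + (((c + \<alpha> * (v \<bullet> v)) ^ k - c ^ k) / (v \<bullet> v)) *\<^sub>R outer v v"
proof (induction k)
  case 0
  show ?case by simp
next
  case (Suc k)
  define M where "M = outer v v"
  define s where "s = v \<bullet> v"
  define d where "d k = ((c + \<alpha> * s) ^ k - c ^ k) / s" for k
  have "s \<noteq> 0" using assms(3) by (simp add: s_def)
  then have d_Suc: "d (Suc k) = c * d k + \<alpha> * c ^ k + \<alpha> * s * d k"
    by (simp add: d_def field_simps)
  have LM: "L ** M = c *\<^sub>R M"
    by (simp add: M_def matrix_mult_outer assms(2) outer_scaleR_left)
  have "v v* mpow L k = c ^ k *\<^sub>R v"
    by (metis assms(1,2) mpow_mult_eigenvector transpose_matrix_vector transpose_mpow)
  then have MP: "M ** mpow L k = c ^ k *\<^sub>R M"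
    by (simp add: M_def outer_mult_matrix outer_scaleR_right)
  have MM: "M ** M = s *\<^sub>R M"
    by (simp add: M_def s_def outer_mult_outer)
  have "mpow (L + \<alpha> *\<^sub>R M) (Suc k) = (L + \<alpha> *\<^sub>R M) ** (mpow L k + d k *\<^sub>R M)"
    using Suc by (simp add: M_def d_def s_def)
  also have "\<dots> = L ** mpow L k + d k *\<^sub>R (L ** M) + \<alpha> *\<^sub>R (M ** mpow L k)
      + (\<alpha> * d k) *\<^sub>R (M ** M)"
    by (simp add: matrix_add_ldistrib matrix_mult_add_rdistrib matrix_scalar_ac
        scalar_matrix_assoc[symmetric] scaleR_add_right)
  also have "\<dots> = mpow L (Suc k) + d (Suc k) *\<^sub>R M"
    by (simp add: LM MP MM d_Suc scaleR_add_left mult_ac)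
  finally show ?case by (simp add: M_def d_def s_def)
qed

lemma mpow_of_real_scaled:
  fixes H :: "real^'n::finite^'n"
  shows "mpow (\<chi> i j. z * complex_of_real (H $ i $ j)) k
       = (\<chi> i j. z ^ k * complex_of_real (mpow H k $ i $ j))"
  by (induction k)
    (simp_all add: vec_eq_iff mat_def matrix_matrix_mult_def sum_distrib_left algebra_simps)

lemma abs_mpow_entry_le:
  fixes H :: "real^'n::finite^'n"
  shows "\<bar>mpow H k $ i $ j\<bar> \<le> (\<Sum>i\<in>UNIV. \<Sum>j\<in>UNIV. \<bar>H $ i $ j\<bar>) ^ k"
proof (induction k arbitrary: i j)
  case 0
  show ?case by (simp add: mat_def)
next
  case (Suc k)
  define m where "m = (\<Sum>i\<in>UNIV. \<Sum>j\<in>UNIV. \<bar>H $ i $ j\<bar>)"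
  have row: "(\<Sum>l\<in>UNIV. \<bar>H $ i $ l\<bar>) \<le> m"
    unfolding m_def by (rule member_le_sum) (auto intro: sum_nonneg)
  have "\<bar>mpow H (Suc k) $ i $ j\<bar> = \<bar>\<Sum>l\<in>UNIV. H $ i $ l * mpow H k $ l $ j\<bar>"
    by (simp add: matrix_matrix_mult_def)
  also have "\<dots> \<le> (\<Sum>l\<in>UNIV. \<bar>H $ i $ l\<bar> * m ^ k)"
    by (rule order_trans[OF sum_abs])
      (auto intro!: sum_mono mult_left_mono simp: abs_mult Suc[folded m_def])
  also have "\<dots> = (\<Sum>l\<in>UNIV. \<bar>H $ i $ l\<bar>) * m ^ k"
    by (simp add: sum_distrib_right)
  also have "\<dots> \<le> m * m ^ k"
    using row by (simp add: mult_right_mono m_def sum_nonneg)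
  finally show ?case by (simp add: m_def)
qed

lemma summable_mpow_entry_exp_series:
  fixes H :: "real^'n::finite^'n"
  shows "summable (\<lambda>k. z ^ k * complex_of_real (mpow H k $ i $ j) / of_nat (fact k))"
proof -
  define m where "m = (\<Sum>i\<in>UNIV. \<Sum>j\<in>UNIV. \<bar>H $ i $ j\<bar>)"
  have "summable (\<lambda>k. (cmod z * m) ^ k /\<^sub>R fact k)"
    using exp_converges sums_summable by blast
  then show ?thesis
  proof (rule summable_comparison_test'[where N=0])
    fix k :: nat
    have "norm (z ^ k * complex_of_real (mpow H k $ i $ j) / of_nat (fact k))
        = cmod z ^ k * \<bar>mpow H k $ i $ j\<bar> / fact k"
      by (simp add: norm_mult norm_divide norm_power)
    also have "\<dots> \<le> cmod z ^ k * m ^ k / fact k"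
      using abs_mpow_entry_le[of H k i j]
      by (auto intro!: divide_right_mono mult_left_mono simp: m_def)
    finally show "norm (z ^ k * complex_of_real (mpow H k $ i $ j) / of_nat (fact k))
        \<le> (cmod z * m) ^ k /\<^sub>R fact k"
      by (simp add: power_mult_distrib divide_inverse_commute)
  qed
qed

lemma transition_entry_sums:
  fixes H :: "real^'n::finite^'n"
  shows "(\<lambda>k. (- \<i> * of_real t) ^ k * complex_of_real (mpow H k $ i $ j) / of_nat (fact k))
           sums (transition H t $ i $ j)"
  using summable_mpow_entry_exp_series[of "- \<i> * of_real t" H i j]
  unfolding transition_def mexp_def vec_lambda_beta mpow_of_real_scaled
  by (rule summable_sums)

lemma exp_of_real_sums:
  "(\<lambda>k. z ^ k * complex_of_real (c ^ k) / of_nat (fact k)) sums exp (z * of_real c)"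
  using exp_converges[of "z * of_real c"]
  by (simp add: power_mult_distrib scaleR_conv_of_real divide_inverse_commute mult_ac)

lemma transition_symmetric:
  assumes "transpose H = H"
  shows "transition H t $ j $ i = transition H t $ i $ j"
proof -
  have "mpow H k $ j $ i = mpow H k $ i $ j" for k
    using transpose_mpow[of H k] assms by (simp add: transpose_def vec_eq_iff)
  then show ?thesis
    using transition_entry_sums[of t H i j] transition_entry_sums[of t H j i]
    by (simp add: sums_unique2)
qed

lemma transition_mult_eigenvector:
  fixes H :: "real^'n::finite^'n"
  assumes "H *v v = c *\<^sub>R v"
  shows "(\<Sum>j\<in>UNIV. transition H t $ i $ j * of_real (v $ j))
       = exp (- \<i> * of_real t * of_real c) * of_real (v $ i)"
proof -
  define z where "z = - \<i> * complex_of_real t"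
  have "(\<lambda>k. \<Sum>j\<in>UNIV. z ^ k * of_real (mpow H k $ i $ j) / of_nat (fact k) * of_real (v $ j))
      sums (\<Sum>j\<in>UNIV. transition H t $ i $ j * of_real (v $ j))"
    unfolding z_def by (intro sums_sum sums_mult2 transition_entry_sums)
  moreover have "(\<Sum>j\<in>UNIV. z ^ k * of_real (mpow H k $ i $ j) / of_nat (fact k) * of_real (v $ j))
      = z ^ k * of_real (c ^ k) / of_nat (fact k) * of_real (v $ i)" for k
  proof -
    have row_sum: "(\<Sum>j\<in>UNIV. mpow H k $ i $ j * v $ j) = c ^ k * v $ i"
      using arg_cong[OF mpow_mult_eigenvector[OF assms, of k], of "\<lambda>x. x $ i"]
      by (simp add: matrix_vector_mult_def)
    have "(\<Sum>j\<in>UNIV. z ^ k * of_real (mpow H k $ i $ j) / of_nat (fact k) * of_real (v $ j))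
        = z ^ k / of_nat (fact k) * of_real (\<Sum>j\<in>UNIV. mpow H k $ i $ j * v $ j)"
      by (simp add: sum_distrib_left mult.assoc)
    then show ?thesis
      by (simp add: row_sum)
  qed
  moreover have "(\<lambda>k. z ^ k * of_real (c ^ k) / of_nat (fact k) * of_real (v $ i))
      sums (exp (z * of_real c) * of_real (v $ i))"
    by (intro sums_mult2 exp_of_real_sums)
  ultimately show ?thesis by (simp add: z_def sums_unique2)
qed

lemma transition_rank_one_update:
  fixes L :: "real^'n::finite^'n"
  assumes "transpose L = L" and "L *v v = c *\<^sub>R v" and "v \<noteq> 0"
  shows "transition (L + \<alpha> *\<^sub>R outer v v) t $ i $ j = transition L t $ i $ j
           + of_real (v $ i * v $ j / (v \<bullet> v))
             * (exp (- \<i> * of_real t * of_real (c + \<alpha> * (v \<bullet> v)))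
                - exp (- \<i> * of_real t * of_real c))"
proof -
  define z where "z = - \<i> * complex_of_real t"
  define s where "s = v \<bullet> v"
  have "s \<noteq> 0" using assms(3) by (simp add: s_def)
  have "(\<lambda>k. z ^ k * of_real (mpow L k $ i $ j) / of_nat (fact k)
          + of_real (v $ i * v $ j / s) * (z ^ k * of_real ((c + \<alpha> * s) ^ k) / of_nat (fact k)
            - z ^ k * of_real (c ^ k) / of_nat (fact k)))
      sums (transition L t $ i $ j
          + of_real (v $ i * v $ j / s) * (exp (z * of_real (c + \<alpha> * s)) - exp (z * of_real c)))"
    unfolding z_def by (intro sums_add sums_mult sums_diff transition_entry_sums exp_of_real_sums)
  moreover have "(\<lambda>k. z ^ k * of_real (mpow (L + \<alpha> *\<^sub>R outer v v) k $ i $ j) / of_nat (fact k))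
      sums (transition (L + \<alpha> *\<^sub>R outer v v) t $ i $ j)"
    unfolding z_def by (rule transition_entry_sums)
  moreover have "z ^ k * of_real (mpow (L + \<alpha> *\<^sub>R outer v v) k $ i $ j) / of_nat (fact k)
      = z ^ k * of_real (mpow L k $ i $ j) / of_nat (fact k)
        + of_real (v $ i * v $ j / s) * (z ^ k * of_real ((c + \<alpha> * s) ^ k) / of_nat (fact k)
          - z ^ k * of_real (c ^ k) / of_nat (fact k))" for k
  proof -
    have entry: "mpow (L + \<alpha> *\<^sub>R outer v v) k $ i $ j
        = mpow L k $ i $ j + ((c + \<alpha> * s) ^ k - c ^ k) / s * (v $ i * v $ j)"
      unfolding mpow_rank_one_update[OF assms] by (simp add: outer_def s_def)
    show ?thesis
      unfolding entry using \<open>s \<noteq> 0\<close> by (simp add: field_simps)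
  qed
  ultimately show ?thesis
    by (simp add: z_def s_def sums_unique2)
qed

lemma ebasis_eq_axis: "ebasis a = axis a 1"
  by (simp add: ebasis_def axis_def)

lemma matrix_vector_mult_ebasis: "(A *v ebasis a) $ i = A $ i $ a"
  by (simp add: matrix_vector_mult_def ebasis_def if_distrib[of "\<lambda>x. _ * x"] cong: if_cong)

lemma sum_mult_ebasis_diff:
  fixes f :: "'n::finite \<Rightarrow> complex"
  shows "(\<Sum>j\<in>UNIV. f j * of_real ((ebasis a - ebasis b) $ j)) = f a - f b"
  by (simp add: ebasis_def right_diff_distrib sum_subtractf if_distrib[of complex_of_real]
      if_distrib[of "\<lambda>x. _ * x"] cong: if_cong)

lemma exp_minus_i_odd_multiple_pi:
  assumes "x = pi * (2 * of_int k + 1)"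
  shows "exp (- \<i> * of_real x) = -1"
proof -
  have "exp (complex_of_real ((2 * of_int (- k - 1) + 1) * pi) * \<i>) = -1"
    by (rule exp_integer_2pi_plus1) simp
  moreover have "complex_of_real ((2 * of_int (- k - 1) + 1) * pi) * \<i> = - \<i> * of_real x"
    using assms by (simp add: algebra_simps)
  ultimately show ?thesis by simp
qed

lemma transition_twin_swap:
  fixes L :: "real^'n::finite^'n" and a b :: 'n
  defines "v \<equiv> ebasis a - ebasis b"
  assumes "transpose L = L" and "a \<noteq> b" and "L *v v = c *\<^sub>R v"
    and "exp (- \<i> * of_real (2 * \<alpha> * t)) = -1"
  shows "transition (L + \<alpha> *\<^sub>R outer v v) t $ a $ b = transition L t $ a $ a"
    and "transition (L + \<alpha> *\<^sub>R outer v v) t $ a $ b = transition L t $ b $ b"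
proof -
  define z where "z = - \<i> * complex_of_real t"
  have v: "v $ a = 1" "v $ b = -1"
    using \<open>a \<noteq> b\<close> by (simp_all add: v_def ebasis_def)
  have "v \<bullet> v = 2"
    using \<open>a \<noteq> b\<close>
    by (simp add: v_def ebasis_eq_axis inner_diff_left inner_diff_right inner_axis_axis)
  then have "v \<noteq> 0" by auto
  have exponent: "z * of_real (c + \<alpha> * 2) = z * of_real c + - \<i> * of_real (2 * \<alpha> * t)"
    by (simp add: z_def algebra_simps)
  have "exp (z * of_real (c + \<alpha> * 2)) = - exp (z * of_real c)"
    unfolding exponent exp_add assms(5) by simp
  then have swap: "transition (L + \<alpha> *\<^sub>R outer v v) t $ a $ b
      = transition L t $ a $ b + exp (z * of_real c)"
    using transition_rank_one_update[OF assms(2,4) \<open>v \<noteq> 0\<close>, of \<alpha> t a b] v \<open>v \<bullet> v = 2\<close>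
    by (simp add: z_def)
  have column: "transition L t $ i $ a - transition L t $ i $ b
      = exp (z * of_real c) * of_real (v $ i)" for i
    using transition_mult_eigenvector[OF assms(4), of t i]
    unfolding v_def sum_mult_ebasis_diff by (simp add: z_def)
  show "transition (L + \<alpha> *\<^sub>R outer v v) t $ a $ b = transition L t $ a $ a"
    using swap column[of a] v by (simp add: algebra_simps)
  show "transition (L + \<alpha> *\<^sub>R outer v v) t $ a $ b = transition L t $ b $ b"
    using swap column[of b] v transition_symmetric[OF assms(2), of t a b]
    by (simp add: algebra_simps)
qed

lemma laplacian_transpose: "simple_graph E \<Longrightarrow> transpose (laplacian E) = laplacian E"
  by (auto simp: laplacian_def transpose_def vec_eq_iff simple_graph_def)

lemma card_neighbours_twins:
  fixes E :: "'n::finite \<Rightarrow> 'n \<Rightarrow> bool"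
  assumes "simple_graph E" and "nbhd E a - {b} = nbhd E b - {a}"
  shows "card {k. E a k} = card {k. E b k}"
proof (cases "E a b")
  case True
  then have "E b a" using assms(1) by (simp add: simple_graph_def)
  have "card {k. E a k} = Suc (card ({k. E a k} - {b}))"
    by (rule card_Suc_Diff1[symmetric]) (use True in auto)
  also have "{k. E a k} - {b} = {k. E b k} - {a}"
    using assms(2) by (simp add: nbhd_def)
  also have "Suc (card \<dots>) = card {k. E b k}"
    by (rule card_Suc_Diff1) (use \<open>E b a\<close> in auto)
  finally show ?thesis .
next
  case False
  then have "{k. E a k} = {k. E a k} - {b}" "{k. E b k} = {k. E b k} - {a}"
    using assms(1) by (auto simp: simple_graph_def)
  then show ?thesis using assms(2) by (simp add: nbhd_def)
qed

lemma laplacian_mult_twin_difference: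
  assumes "simple_graph E" and "a \<noteq> b" and "nbhd E a - {b} = nbhd E b - {a}"
  shows "laplacian E *v (ebasis a - ebasis b)
       = (real (card {k. E a k}) + (if E a b then 1 else 0)) *\<^sub>R (ebasis a - ebasis b)"
proof (rule vec_eq_iff[THEN iffD2], intro allI)
  fix i
  have sym: "E x y \<longleftrightarrow> E y x" for x y using assms(1) by (auto simp: simple_graph_def)
  have "\<not> E a a" using assms(1) by (simp add: simple_graph_def)
  have entry: "(laplacian E *v (ebasis a - ebasis b)) $ i
      = laplacian E $ i $ a - laplacian E $ i $ b"
    by (simp add: matrix_vector_mult_diff_distrib matrix_vector_mult_ebasis)
  consider "i = a" | "i = b" | "i \<noteq> a" "i \<noteq> b" by blast
  then show "(laplacian E *v (ebasis a - ebasis b)) $ i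
      = ((real (card {k. E a k}) + (if E a b then 1 else 0)) *\<^sub>R (ebasis a - ebasis b)) $ i"
  proof cases
    case 1
    then show ?thesis using assms(2) \<open>\<not> E a a\<close>
      unfolding entry by (simp add: laplacian_def ebasis_def)
  next
    case 2
    then show ?thesis using assms(2) card_neighbours_twins[OF assms(1,3)] sym[of a b]
      unfolding entry by (simp add: laplacian_def ebasis_def)
  next
    case 3
    then have "E i a \<longleftrightarrow> E i b" using assms(3) sym by (auto simp: nbhd_def set_eq_iff)
    with 3 show ?thesis
      unfolding entry by (simp add: laplacian_def ebasis_def)
  qed
qed

theorem theorem2p4:
  fixes E :: "'n::finite \<Rightarrow> 'n \<Rightarrow> bool"
    and a b p :: 'n and \<alpha> \<tau> :: real
  assumes "simple_graph E" and "connected_graph E"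
    and "a \<noteq> b"
    and "nbhd E a - {b} = nbhd E b - {a}"
    and "periodic_at (laplacian E) p \<tau>" and "\<tau> \<noteq> 0"
  shows "(p \<in> {a, b} \<and> (\<exists>k::int. 2 * \<alpha> * \<tau> = pi * (2 * k + 1)) \<longrightarrow>
            pst (laplacian E + \<alpha> *\<^sub>R outer (ebasis a - ebasis b) (ebasis a - ebasis b)) a b \<tau>)
       \<and> (p \<notin> {a, b} \<longrightarrow>
            periodic_at (laplacian E + \<alpha> *\<^sub>R outer (ebasis a - ebasis b) (ebasis a - ebasis b)) p \<tau>)"
proof -
  define v where "v = ebasis a - ebasis b"
  have sym: "transpose (laplacian E) = laplacian E"
    using assms(1) by (rule laplacian_transpose)
  obtain c where eig: "laplacian E *v v = c *\<^sub>R v"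
    using laplacian_mult_twin_difference[OF assms(1,3,4)] unfolding v_def by blast
  show ?thesis
    unfolding v_def[symmetric]
  proof (intro conjI impI)
    assume "p \<in> {a, b} \<and> (\<exists>k::int. 2 * \<alpha> * \<tau> = pi * (2 * k + 1))"
    then obtain k :: int where p: "p \<in> {a, b}" and k: "2 * \<alpha> * \<tau> = pi * (2 * of_int k + 1)"
      by blast
    have "exp (- \<i> * of_real (2 * \<alpha> * \<tau>)) = -1"
      using k by (rule exp_minus_i_odd_multiple_pi)
    with transition_twin_swap[OF sym assms(3) eig[unfolded v_def], folded v_def] p
    have "transition (laplacian E + \<alpha> *\<^sub>R outer v v) \<tau> $ a $ b
        = transition (laplacian E) \<tau> $ p $ p"
      by auto
    with assms(5) show "pst (laplacian E + \<alpha> *\<^sub>R outer v v) a b \<tau>"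
      by (simp add: pst_def periodic_at_def)
  next
    assume "p \<notin> {a, b}"
    then have "v $ p = 0" by (simp add: v_def ebasis_def)
    moreover have "v \<noteq> 0"
      using assms(3) by (auto simp: v_def ebasis_def vec_eq_iff)
    ultimately have "transition (laplacian E + \<alpha> *\<^sub>R outer v v) \<tau> $ p $ p
        = transition (laplacian E) \<tau> $ p $ p"
      by (simp add: transition_rank_one_update[OF sym eig])
    with assms(5) show "periodic_at (laplacian E + \<alpha> *\<^sub>R outer v v) p \<tau>"
      by (simp add: periodic_at_def)
  qed
qed

end
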